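(* Under Assumption 1, for the GARCH-2F variance process, with $\varphi=\mathbb{E}\big[\|\boldsymbol{B}+\boldsymbol{b}(\boldsymbol{W}_t)\|\big]$ and $c=\|\boldsymbol{\omega}\|+\mathbb{E}\big[\|\boldsymbol{\alpha}\boldsymbol{f}(\boldsymbol{W}_t)\|\big]<\infty$, one has for every $\boldsymbol{x}\in\mathcal{D}$ $$\mathbb{E}\big[\|\boldsymbol{v}_t\|\ \big|\ \boldsymbol{v}_{t-1}=\boldsymbol{x}\big]\le\varphi\|\boldsymbol{x}\|+c.$$
   Context: Model (GARCH-2F): $Z_{1,t},Z_{2,t}$ i.i.d. $N(0,1)$ in $t$, mutually independent; $\boldsymbol{W}_t=(W_{1,t},W_{2,t})^T=(Z_{1,t-1},Z_{2,t-1})^T$ (independent of $\boldsymbol{v}_{t-1}$); $\boldsymbol{v}_t=\boldsymbol{\omega}+\boldsymbol{\beta}\boldsymbol{v}_{t-1}+\boldsymbol{\alpha}\big[(W_{1,t}-\gamma_1\sqrt{v_{1,t-1}})^2,(W_{2,t}-\gamma_2\sqrt{v_{2,t-1}})^2\big]^T$ with parameters as in Assumption 1 ($\omega_i>0$, $\beta_{ij}\ge0$, $\alpha_{ij}\ge0$, $\alpha_{11}+\alpha_{12}>0$, $\alpha_{21}+\alpha_{22}>0$, $\beta_{11}+\beta_{12}>0$, $\beta_{21}+\beta_{22}>0$), $\gamma_1,\gamma_2\in\mathbb{R}$. State space $\mathcal{D}=[\omega_1,\infty)\times[\omega_2,\infty)$. $\boldsymbol{B}$ has entries $B_{ij}=\beta_{ij}+\alpha_{ij}\gamma_j^2$.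 $\boldsymbol{f}(\boldsymbol{W}_t)=\big((|\gamma_1|+\sqrt{\gamma_1^2+W_{1,t}^2})^2,(|\gamma_2|+\sqrt{\gamma_2^2+W_{2,t}^2})^2\big)^T$ and $\boldsymbol{b}(\boldsymbol{W}_t)$ is the $2\times2$ matrix with entries $b_{ij}=\alpha_{ij}W_{j,t}^2\mathbf{1}_{(\gamma_jW_{j,t}<0)}$. $\|\cdot\|$ is the Euclidean vector norm and the induced ($L_2$ operator) matrix norm. *)

theory Defs
  imports "HOL-Probability.Probability"
begin

definition stdN2 :: "(real \<times> real) measure" where
  "stdN2 = density lborel std_normal_density \<Otimes>\<^sub>M density lborel std_normal_density"

definition vec2 :: "real \<Rightarrow> real \<Rightarrow> real^2" where
  "vec2 a b = (\<chi> i. if i = 1 then a else b)"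

definition garch_step :: "real^2 \<Rightarrow> real^2^2 \<Rightarrow> real^2^2 \<Rightarrow> real^2 \<Rightarrow> real^2 \<Rightarrow> real^2 \<Rightarrow> real^2" where
  "garch_step \<omega> \<beta> \<alpha> \<gamma> x W = \<omega> + \<beta> *v x + \<alpha> *v (\<chi> j. (W$j - \<gamma>$j * sqrt (x$j))\<^sup>2)"

definition stateD :: "real^2 \<Rightarrow> (real^2) set" where
  "stateD \<omega> = {x. \<omega>$1 \<le> x$1 \<and> \<omega>$2 \<le> x$2}"

definition Bmat :: "real^2^2 \<Rightarrow> real^2^2 \<Rightarrow> real^2 \<Rightarrow> real^2^2" where
  "Bmat \<beta> \<alpha> \<gamma> = (\<chi> i j. \<beta>$i$j + \<alpha>$i$j * (\<gamma>$j)\<^sup>2)"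

definition bmat :: "real^2^2 \<Rightarrow> real^2 \<Rightarrow> real^2 \<Rightarrow> real^2^2" where
  "bmat \<alpha> \<gamma> W = (\<chi> i j. \<alpha>$i$j * (W$j)\<^sup>2 * (if \<gamma>$j * W$j < 0 then 1 else 0))"

definition ffun :: "real^2 \<Rightarrow> real^2 \<Rightarrow> real^2" where
  "ffun \<gamma> W = (\<chi> i. (\<bar>\<gamma>$i\<bar> + sqrt ((\<gamma>$i)\<^sup>2 + (W$i)\<^sup>2))\<^sup>2)"

definition mnorm :: "real^2^2 \<Rightarrow> real" where
  "mnorm M = onorm (\<lambda>v. M *v v)"

end

theory Submission
  imports Defs
begin

text \<open>
  Expanding the square and bounding the cross term by AM-GM when \<open>\<gamma>\<^sub>j W\<^sub>j < 0\<close> (it is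
  nonpositive otherwise) gives
  \<open>(W\<^sub>j - \<gamma>\<^sub>j \<surd>x\<^sub>j)\<^sup>2 \<le> (\<gamma>\<^sub>j\<^sup>2 + W\<^sub>j\<^sup>2 \<one>(\<gamma>\<^sub>j W\<^sub>j < 0)) x\<^sub>j + f\<^sub>j(W)\<close>.
  As all coefficients are nonnegative, \<open>v\<^sub>t\<close> lies componentwise between \<open>0\<close> and
  \<open>\<omega> + (B + b(W)) x + \<alpha> f(W)\<close>, so
  \<open>\<parallel>v\<^sub>t\<parallel> \<le> \<parallel>\<omega>\<parallel> + \<parallel>B + b(W)\<parallel> \<parallel>x\<parallel> + \<parallel>\<alpha> f(W)\<parallel>\<close>, and integrating over \<open>W\<close> gives the claim.
\<close>

lemma shifted_square_le:
  fixes w g x :: real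
  assumes "0 \<le> x"
  shows "(w - g * sqrt x)\<^sup>2
    \<le> (g\<^sup>2 + w\<^sup>2 * (if g * w < 0 then 1 else 0)) * x + (\<bar>g\<bar> + sqrt (g\<^sup>2 + w\<^sup>2))\<^sup>2"
proof -
  have sq_x: "(sqrt x)\<^sup>2 = x" using assms by simp
  have f_ge: "g\<^sup>2 + w\<^sup>2 \<le> (\<bar>g\<bar> + sqrt (g\<^sup>2 + w\<^sup>2))\<^sup>2"
    by (simp add: power2_sum)
  have expand: "(w - g * sqrt x)\<^sup>2 = w\<^sup>2 - 2 * (g * w) * sqrt x + g\<^sup>2 * x"
    using sq_x by (simp add: power2_diff power_mult_distrib algebra_simps)
  show ?thesis
  proof (cases "g * w < 0")
    case True
    have "0 \<le> (g + w * sqrt x)\<^sup>2" by simp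
    then have "- (2 * (g * w) * sqrt x) \<le> g\<^sup>2 + w\<^sup>2 * x"
      using sq_x by (simp add: power2_sum power_mult_distrib algebra_simps)
    with True show ?thesis using expand f_ge by (simp add: algebra_simps)
  next
    case False
    then have "0 \<le> g * w * sqrt x" using assms by simp
    with False show ?thesis
      using expand f_ge zero_le_power2[of g] by (simp only: if_False mult_zero_right add_0_right)
  qed
qed

lemma norm_vec_mono:
  fixes v w :: "real^'n"
  assumes "0 \<le> v" "v \<le> w"
  shows "norm v \<le> norm w"
  unfolding norm_vec_def L2_set_def
  using assms by (auto simp: less_eq_vec_def intro!: real_sqrt_le_mono sum_mono power_mono)

lemma matrix_vector_mult_mono:
  fixes A :: "real^'n^'m"
  assumes "\<forall>i j. 0 \<le> A$i$j" "u \<le> v"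
  shows "A *v u \<le> A *v v"
  using assms by (auto simp: less_eq_vec_def matrix_vector_mult_def intro!: sum_mono mult_left_mono)

lemma Bmat_plus_bmat_mult:
  "(Bmat \<beta> \<alpha> \<gamma> + bmat \<alpha> \<gamma> W) *v x
     = \<beta> *v x + \<alpha> *v (\<chi> j. ((\<gamma>$j)\<^sup>2 + (W$j)\<^sup>2 * (if \<gamma>$j * W$j < 0 then 1 else 0)) * x$j)"
  by (simp add: vec_eq_iff Bmat_def bmat_def matrix_vector_mult_def sum.distrib[symmetric] algebra_simps)

lemma garch_step_le:
  assumes "\<forall>i j. 0 \<le> \<alpha>$i$j" "0 \<le> x"
  shows "garch_step \<omega> \<beta> \<alpha> \<gamma> x W \<le> \<omega> + (Bmat \<beta> \<alpha> \<gamma> + bmat \<alpha> \<gamma> W) *v x + \<alpha> *v ffun \<gamma> W"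
proof -
  define r where "r = (\<chi> j. ((\<gamma>$j)\<^sup>2 + (W$j)\<^sup>2 * (if \<gamma>$j * W$j < 0 then 1 else 0)) * x$j)"
  have innovation_le: "(\<chi> j. (W$j - \<gamma>$j * sqrt (x$j))\<^sup>2) \<le> r + ffun \<gamma> W"
    using assms(2) by (simp add: r_def less_eq_vec_def ffun_def shifted_square_le)
  have "\<alpha> *v (\<chi> j. (W$j - \<gamma>$j * sqrt (x$j))\<^sup>2) \<le> \<alpha> *v r + \<alpha> *v ffun \<gamma> W"
    using matrix_vector_mult_mono[OF assms(1) innovation_le] by (simp only: matrix_vector_right_distrib)
  then show ?thesis
    unfolding garch_step_def Bmat_plus_bmat_mult r_def[symmetric] by (simp add: add.assoc)
qed

lemma garch_step_nonneg:
  assumes "0 \<le> \<omega>" "\<forall>i j. 0 \<le> \<beta>$i$j" "\<forall>i j. 0 \<le> \<alpha>$i$j" "0 \<le> x"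
  shows "0 \<le> garch_step \<omega> \<beta> \<alpha> \<gamma> x W"
proof -
  have "0 \<le> \<beta> *v x" "0 \<le> \<alpha> *v (\<chi> j. (W$j - \<gamma>$j * sqrt (x$j))\<^sup>2)"
    using matrix_vector_mult_mono[OF assms(2), of 0 x] matrix_vector_mult_mono[OF assms(3), of 0]
      assms(4) by (simp_all add: less_eq_vec_def)
  with assms(1) show ?thesis unfolding garch_step_def by simp
qed

lemma norm_garch_step_le:
  assumes "0 \<le> \<omega>" "\<forall>i j. 0 \<le> \<beta>$i$j" "\<forall>i j. 0 \<le> \<alpha>$i$j" "0 \<le> x"
  shows "norm (garch_step \<omega> \<beta> \<alpha> \<gamma> x W)
    \<le> norm \<omega> + mnorm (Bmat \<beta> \<alpha> \<gamma> + bmat \<alpha> \<gamma> W) * norm x + norm (\<alpha> *v ffun \<gamma> W)"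
proof -
  define M where "M = Bmat \<beta> \<alpha> \<gamma> + bmat \<alpha> \<gamma> W"
  have "norm (garch_step \<omega> \<beta> \<alpha> \<gamma> x W) \<le> norm (\<omega> + M *v x + \<alpha> *v ffun \<gamma> W)"
    unfolding M_def
    using garch_step_nonneg[OF assms] garch_step_le[OF assms(3,4)] by (rule norm_vec_mono)
  also have "\<dots> \<le> norm \<omega> + norm (M *v x) + norm (\<alpha> *v ffun \<gamma> W)"
    by (meson add_right_mono norm_triangle_ineq order_trans)
  also have "norm (M *v x) \<le> mnorm M * norm x"
    unfolding mnorm_def by (rule onorm[OF matrix_vector_mul_bounded_linear])
  finally show ?thesis unfolding M_def by simp
qed

lemma mnorm_nonneg: "0 \<le> mnorm M"
  unfolding mnorm_def by (intro onorm_pos_le matrix_vector_mul_bounded_linear)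

lemma lipschitz_on_onorm_matrix:
  "(real CARD('m) * real CARD('n))-lipschitz_on UNIV (\<lambda>A :: real^'n^'m. onorm ((*v) A))"
proof -
  define K where "K = real CARD('m) * real CARD('n)"
  have le: "onorm ((*v) A) \<le> onorm ((*v) B) + K * norm (A - B)" for A B :: "real^'n^'m"
  proof -
    have "onorm ((*v) A) = onorm (\<lambda>v. B *v v + (A - B) *v v)"
      by (simp add: matrix_vector_mult_diff_rdistrib)
    also have "\<dots> \<le> onorm ((*v) B) + onorm ((*v) (A - B))"
      by (intro onorm_triangle matrix_vector_mul_bounded_linear)
    also have "onorm ((*v) (A - B)) \<le> K * norm (A - B)"
      unfolding K_def
      by (rule onorm_le_matrix_component,
          rule order_trans[OF component_le_norm_cart Finite_Cartesian_Product.norm_nth_le])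
    finally show ?thesis by simp
  qed
  show ?thesis
    unfolding K_def[symmetric] lipschitz_on_def dist_real_def dist_norm
  proof (intro conjI ballI)
    fix A B :: "real^'n^'m"
    show "\<bar>onorm ((*v) A) - onorm ((*v) B)\<bar> \<le> K * norm (A - B)"
      using le[of A B] le[of B A] by (simp add: abs_le_iff norm_minus_commute)
  qed (simp add: K_def)
qed

lemma borel_measurable_mnorm[measurable]: "mnorm \<in> borel_measurable borel"
proof (rule borel_measurable_continuous_onI)
  show "continuous_on UNIV mnorm"
    unfolding mnorm_def[abs_def] by (rule lipschitz_on_continuous_on[OF lipschitz_on_onorm_matrix])
qed

lemma borel_measurable_vec:
  fixes f :: "'a \<Rightarrow> 'b::euclidean_space^'n"
  assumes "\<And>i. (\<lambda>x. f x $ i) \<in> borel_measurable M"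
  shows "f \<in> borel_measurable M"
  by (subst borel_measurable_euclidean_space)
    (auto simp: Basis_vec_def inner_axis intro!: borel_measurable_inner assms)

lemma prob_space_stdN2: "prob_space stdN2"
  unfolding stdN2_def by (intro prob_space_pair prob_space_normal_density) auto

lemma sets_stdN2[measurable_cong]: "sets stdN2 = sets (borel \<Otimes>\<^sub>M borel)"
  unfolding stdN2_def by (rule sets_pair_measure_cong) simp_all

lemma borel_measurable_vec2[measurable]:
  "(\<lambda>w. vec2 (fst w) (snd w) $ j) \<in> borel_measurable (borel \<Otimes>\<^sub>M borel)"
  by (simp add: vec2_def)

lemma borel_measurable_mnorm_Bmat_bmat:
  "(\<lambda>w. mnorm (Bmat \<beta> \<alpha> \<gamma> + bmat \<alpha> \<gamma> (vec2 (fst w) (snd w)))) \<in> borel_measurable stdN2"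
proof -
  have "(\<lambda>w. Bmat \<beta> \<alpha> \<gamma> + bmat \<alpha> \<gamma> (vec2 (fst w) (snd w))) \<in> borel_measurable stdN2"
    by (intro borel_measurable_vec) (simp add: Bmat_def bmat_def)
  then show ?thesis by measurable
qed

lemma borel_measurable_norm_alpha_ffun:
  "(\<lambda>w. norm (\<alpha> *v ffun \<gamma> (vec2 (fst w) (snd w)))) \<in> borel_measurable stdN2"
proof -
  have "(\<lambda>w. \<alpha> *v ffun \<gamma> (vec2 (fst w) (snd w))) \<in> borel_measurable stdN2"
    by (intro borel_measurable_vec) (simp add: ffun_def matrix_vector_mult_def)
  then show ?thesis by measurable
qed

lemma (in prob_space) nn_integral_le_affine_bound:
  assumes m: "m \<in> borel_measurable M" and F: "F \<in> borel_measurable M"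
    and nonneg: "\<And>w. 0 \<le> m w" "\<And>w. 0 \<le> F w" "0 \<le> a" "0 \<le> s"
    and bound: "\<And>w. g w \<le> m w * s + (a + F w)"
  shows "(\<integral>\<^sup>+ w. ennreal (g w) \<partial>M)
    \<le> (\<integral>\<^sup>+ w. ennreal (m w) \<partial>M) * ennreal s + (ennreal a + (\<integral>\<^sup>+ w. ennreal (F w) \<partial>M))"
proof -
  have "ennreal (g w) \<le> ennreal (m w) * ennreal s + (ennreal a + ennreal (F w))" for w
  proof -
    have "ennreal (g w) \<le> ennreal (m w * s + (a + F w))"
      using bound by (rule ennreal_leI)
    also have "\<dots> = ennreal (m w) * ennreal s + (ennreal a + ennreal (F w))"
      using nonneg by (simp add: ennreal_plus ennreal_mult)
    finally show ?thesis .
  qed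
  then have "(\<integral>\<^sup>+ w. ennreal (g w) \<partial>M) \<le> (\<integral>\<^sup>+ w. ennreal (m w) * ennreal s + (ennreal a + ennreal (F w)) \<partial>M)"
    by (intro nn_integral_mono)
  also have "\<dots> = (\<integral>\<^sup>+ w. ennreal (m w) \<partial>M) * ennreal s + (ennreal a + (\<integral>\<^sup>+ w. ennreal (F w) \<partial>M))"
    using m F by (simp add: nn_integral_add nn_integral_multc emeasure_space_1)
  finally show ?thesis .
qed

theorem mainTheorem5:
  fixes \<omega> \<gamma> :: "real^2" and \<alpha> \<beta> :: "real^2^2" and \<phi> c :: ennreal
  assumes omega_pos: "\<forall>i. \<omega>$i > 0"
    and beta_nonneg: "\<forall>i j. \<beta>$i$j \<ge> 0"
    and alpha_nonneg: "\<forall>i j. \<alpha>$i$j \<ge> 0"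
    and alpha_rows: "\<alpha>$1$1 + \<alpha>$1$2 > 0" "\<alpha>$2$1 + \<alpha>$2$2 > 0"
    and beta_rows: "\<beta>$1$1 + \<beta>$1$2 > 0" "\<beta>$2$1 + \<beta>$2$2 > 0"
    and phi_def: "\<phi> = (\<integral>\<^sup>+ w. ennreal (mnorm (Bmat \<beta> \<alpha> \<gamma> + bmat \<alpha> \<gamma> (vec2 (fst w) (snd w)))) \<partial>stdN2)"
    and c_def: "c = ennreal (norm \<omega>) + (\<integral>\<^sup>+ w. ennreal (norm (\<alpha> *v ffun \<gamma> (vec2 (fst w) (snd w)))) \<partial>stdN2)"
    and c_fin: "c < \<infinity>"
  shows "\<forall>x \<in> stateD \<omega>.
    (\<integral>\<^sup>+ w. ennreal (norm (garch_step \<omega> \<beta> \<alpha> \<gamma> x (vec2 (fst w) (snd w)))) \<partial>stdN2)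
      \<le> \<phi> * ennreal (norm x) + c"
proof
  fix x assume "x \<in> stateD \<omega>"
  then have x_nonneg: "0 \<le> x"
    using omega_pos by (auto simp: stateD_def less_eq_vec_def forall_2 intro: order_trans less_imp_le)
  have omega_nonneg: "0 \<le> \<omega>"
    using omega_pos by (simp add: less_eq_vec_def less_imp_le)
  show "(\<integral>\<^sup>+ w. ennreal (norm (garch_step \<omega> \<beta> \<alpha> \<gamma> x (vec2 (fst w) (snd w)))) \<partial>stdN2)
      \<le> \<phi> * ennreal (norm x) + c"
    unfolding phi_def c_def
    using norm_garch_step_le[OF omega_nonneg beta_nonneg alpha_nonneg x_nonneg]
    by (intro prob_space.nn_integral_le_affine_bound[OF prob_space_stdN2]
        borel_measurable_mnorm_Bmat_bmat borel_measurable_norm_alpha_ffun)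
      (auto simp: mnorm_nonneg algebra_simps)
qed

end
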